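(* Let $n\ge1$. For every rectangular permutation $\pi\in S_n$ there is exactly one pair $(x,\sigma)$ with $x\in\{1,2,u,d\}$ and $\sigma$ a rectangular permutation in $S_{n-1}$ lying in the domain of $\psi_x$, such that $\pi=\psi_x(\sigma)$.
   Context: A permutation is rectangular if it avoids the patterns $2413,2431,4213,4231$; $S_0=\{e_0\}$ contains only the empty permutation. For $\pi\in S_n$ (one-line form) and $1\le i,j\le n+1$, $\rho_{i,j}(\pi)\in S_{n+1}$ is obtained by increasing by $1$ every entry $\ge i$ and inserting the value $i$ at position $j$. Operators: $\psi_1=\rho_{1,1}$, domain all rectangular permutations (including $e_0$); $\psi_2=\rho_{1,2}$, domain rectangular $\pi$ of size $\ge1$ with $\pi_1\ne1$; $\psi_u(\pi)=\rho_{\pi_1,1}(\pi)$, domain rectangular $\pi$ of size $\ge1$ with $\pi_1\neq1$; $\psi_d(\pi)=\rho_{\pi_1+1,1}(\pi)$, domain rectangular $\pi$ of size $\ge1$. *)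

theory Defs
  imports Main
begin

text \<open>Permutations in one-line notation are lists of natural numbers;
a permutation in S_n is a list which is a rearrangement of 1,...,n.
The empty list is the empty permutation e_0.\<close>

definition is_perm :: "nat \<Rightarrow> nat list \<Rightarrow> bool" where
  "is_perm n xs \<longleftrightarrow> length xs = n \<and> distinct xs \<and> set xs = {1..n}"

definition contains :: "nat list \<Rightarrow> nat list \<Rightarrow> bool" where
  "contains xs p \<longleftrightarrow>
     (\<exists>idx :: nat list. length idx = length p \<and> sorted_wrt (<) idx
        \<and> (\<forall>k\<in>set idx. k < length xs)
        \<and> (\<forall>a<length p. \<forall>b<length p. (xs ! (idx ! a) < xs ! (idx ! b)) \<longleftrightarrow> (p ! a < p ! b)))"

definition avoids :: "nat list \<Rightarrow> nat list \<Rightarrow> bool" where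
  "avoids xs p \<longleftrightarrow> \<not> contains xs p"

definition rectangular :: "nat list \<Rightarrow> bool" where
  "rectangular xs \<longleftrightarrow> avoids xs [2,4,1,3] \<and> avoids xs [2,4,3,1]
      \<and> avoids xs [4,2,1,3] \<and> avoids xs [4,2,3,1]"

text \<open>rho i j pi: increase by 1 every entry >= i and insert the value i at
position j (1-based), for 1 <= i,j <= n+1.\<close>

definition rho :: "nat \<Rightarrow> nat \<Rightarrow> nat list \<Rightarrow> nat list" where
  "rho i j xs = (let ys = map (\<lambda>v. if i \<le> v then v + 1 else v) xs
                 in take (j - 1) ys @ [i] @ drop (j - 1) ys)"

datatype op = Op1 | Op2 | OpU | OpD

fun psi :: "op \<Rightarrow> nat list \<Rightarrow> nat list" where
  "psi Op1 xs = rho 1 1 xs"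
| "psi Op2 xs = rho 1 2 xs"
| "psi OpU xs = rho (hd xs) 1 xs"
| "psi OpD xs = rho (hd xs + 1) 1 xs"

fun in_dom :: "op \<Rightarrow> nat list \<Rightarrow> bool" where
  "in_dom Op1 xs = rectangular xs"
| "in_dom Op2 xs = (rectangular xs \<and> length xs \<ge> 1 \<and> hd xs \<noteq> 1)"
| "in_dom OpU xs = (rectangular xs \<and> length xs \<ge> 1 \<and> hd xs \<noteq> 1)"
| "in_dom OpD xs = (rectangular xs \<and> length xs \<ge> 1)"

end

theory Submission
  imports Defs
begin

text \<open>Deleting the entry at a given position of a permutation and standardising the rest
inverts \<open>\<rho>\<close>, and pattern containment survives the deletion, so \<open>\<sigma>\<close> is recovered from
\<open>\<pi> = \<psi>\<^sub>x(\<sigma>)\<close> by deleting the inserted entry, while \<open>x\<close> is read off from \<open>\<pi>\<^sub>1\<close> and \<open>\<pi>\<^sub>2\<close>: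
\<open>\<pi>\<^sub>1 = 1\<close> for \<open>\<psi>\<^sub>1\<close>, \<open>\<pi>\<^sub>2 = \<pi>\<^sub>1 + 1\<close> for \<open>\<psi>\<^sub>u\<close>, \<open>\<pi>\<^sub>2 = \<pi>\<^sub>1 - 1\<close> for \<open>\<psi>\<^sub>d\<close> and \<open>\<pi>\<^sub>2 = 1\<close> for \<open>\<psi>\<^sub>2\<close>.
For existence, if \<open>\<pi>\<^sub>1 \<noteq> 1\<close> then rectangularity forces \<open>\<pi>\<^sub>2 \<in> {1, \<pi>\<^sub>1 + 1, \<pi>\<^sub>1 - 1}\<close>:
otherwise the entries \<open>1\<close> and \<open>\<pi>\<^sub>1 \<plusminus> 1\<close> (the one strictly between \<open>\<pi>\<^sub>1\<close> and \<open>\<pi>\<^sub>2\<close>)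
complete \<open>\<pi>\<^sub>1 \<pi>\<^sub>2\<close> to one of the patterns 2413, 2431, 4213, 4231.\<close>

definition shift_up :: "nat \<Rightarrow> nat \<Rightarrow> nat" where
  "shift_up i v = (if i \<le> v then v + 1 else v)"

definition shift_down :: "nat \<Rightarrow> nat \<Rightarrow> nat" where
  "shift_down i v = (if i < v then v - 1 else v)"

lemma shift_down_shift_up [simp]: "shift_down i (shift_up i v) = v"
  by (simp add: shift_down_def shift_up_def)

lemma shift_up_shift_down: "v \<noteq> i \<Longrightarrow> shift_up i (shift_down i v) = v"
  by (auto simp: shift_down_def shift_up_def)

lemma strict_mono_shift_up: "strict_mono (shift_up i)"
  by (rule strict_monoI) (auto simp: shift_up_def)

lemma shift_down_image:
  assumes "i \<in> {1..n}"
  shows "shift_down i ` ({1..n} - {i}) = {1..n - 1}"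
proof
  show "shift_down i ` ({1..n} - {i}) \<subseteq> {1..n - 1}"
    using assms by (auto simp: shift_down_def)
  show "{1..n - 1} \<subseteq> shift_down i ` ({1..n} - {i})"
  proof
    fix w assume w: "w \<in> {1..n - 1}"
    show "w \<in> shift_down i ` ({1..n} - {i})"
    proof (cases "w < i")
      case True
      then show ?thesis using w by (intro image_eqI[of _ _ w]) (auto simp: shift_down_def)
    next
      case False
      then show ?thesis using w by (intro image_eqI[of _ _ "Suc w"]) (auto simp: shift_down_def)
    qed
  qed
qed

lemma rho_eq_take_drop:
  "rho i j xs = take (j - 1) (map (shift_up i) xs) @ i # drop (j - 1) (map (shift_up i) xs)"
  unfolding rho_def shift_up_def Let_def by simp

lemma contains_map_strict_mono:
  assumes "strict_mono f" and "contains xs p"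
  shows "contains (map f xs) p"
  using assms unfolding contains_def by (auto simp: strict_mono_less)

lemma contains_take_drop_Suc:
  assumes "k < length xs" and "contains (take k xs @ drop (Suc k) xs) p"
  shows "contains xs p"
proof -
  let ?ys = "take k xs @ drop (Suc k) xs"
  define g where "g m = (if m < k then m else Suc m)" for m
  have ys_nth: "?ys ! m = xs ! g m" if "m < length ?ys" for m
    using that assms(1) by (auto simp: g_def nth_append)
  have "strict_mono g"
    by (rule strict_monoI) (auto simp: g_def)
  from assms(2) obtain idx where idx: "length idx = length p" "sorted_wrt (<) idx"
    "\<forall>m\<in>set idx. m < length ?ys"
    "\<forall>a<length p. \<forall>b<length p. (?ys ! (idx ! a) < ?ys ! (idx ! b)) \<longleftrightarrow> (p ! a < p ! b)"
    unfolding contains_def by blast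
  have "sorted_wrt (<) (map g idx)"
    using idx(2) \<open>strict_mono g\<close>
    by (auto simp: sorted_wrt_map strict_mono_less intro: sorted_wrt_mono_rel)
  moreover have "\<forall>m\<in>set (map g idx). m < length xs"
    using idx(3) assms(1) by (auto simp: g_def)
  moreover have "\<forall>a<length p. \<forall>b<length p.
      (xs ! (map g idx ! a) < xs ! (map g idx ! b)) \<longleftrightarrow> (p ! a < p ! b)"
    using idx(1,3,4) ys_nth by (metis nth_map nth_mem)
  ultimately show ?thesis
    unfolding contains_def using idx(1) by (intro exI[of _ "map g idx"]) auto
qed

lemma rectangular_rhoD:
  assumes "rectangular (rho i j s)" and "j - 1 \<le> length s"
  shows "rectangular s"
proof -
  let ?xs = "rho i j s"
  have "take (j - 1) ?xs @ drop (Suc (j - 1)) ?xs = map (shift_up i) s" and "j - 1 < length ?xs"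
    using assms(2) by (auto simp: rho_eq_take_drop)
  then have "contains ?xs p" if "contains s p" for p
    using that contains_take_drop_Suc contains_map_strict_mono[OF strict_mono_shift_up] by metis
  then show ?thesis
    using assms(1) unfolding rectangular_def avoids_def by blast
qed

text \<open>Positions are 0-based here, whereas rho takes 1-based positions.\<close>

definition del_at :: "nat \<Rightarrow> nat list \<Rightarrow> nat list" where
  "del_at k p = map (shift_down (p ! k)) (take k p @ drop (Suc k) p)"

lemma del_at_rho: "k \<le> length s \<Longrightarrow> del_at k (rho i (Suc k) s) = s"
  by (simp add: del_at_def rho_eq_take_drop nth_append map_idI)

lemma del_at_0_Cons [simp]: "del_at 0 (a # xs) = map (shift_down a) xs"
  by (simp add: del_at_def)

lemma del_at_Suc_0_Cons_Cons [simp]: "del_at (Suc 0) (a # b # xs) = map (shift_down b) (a # xs)"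
  by (simp add: del_at_def)

lemma
  assumes "is_perm n p" and "k < n"
  shows is_perm_del_at: "is_perm (n - 1) (del_at k p)"
    and rho_del_at: "rho (p ! k) (Suc k) (del_at k p) = p"
proof -
  let ?i = "p ! k" and ?ys = "take k p @ drop (Suc k) p"
  have p: "length p = n" "distinct p" "set p = {1..n}"
    using assms(1) by (auto simp: is_perm_def)
  have p_split: "p = take k p @ ?i # drop (Suc k) p"
    using assms(2) p(1) by (simp add: id_take_nth_drop)
  then have "distinct (take k p @ ?i # drop (Suc k) p)"
    using p(2) by metis
  then have ys: "distinct ?ys" "?i \<notin> set ?ys"
    by auto
  have "set p = insert ?i (set ?ys)"
    by (subst p_split) auto
  then have set_ys: "set ?ys = {1..n} - {?i}"
    using ys(2) p(3) by auto
  have "inj_on (shift_down ?i) (set ?ys)"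
    by (rule inj_on_inverseI[where g = "shift_up ?i"]) (metis ys(2) shift_up_shift_down)
  moreover have "?i \<in> {1..n}"
    using p assms(2) by (metis nth_mem)
  ultimately have "distinct (del_at k p)" and "set (del_at k p) = {1..n - 1}"
    using ys(1) shift_down_image unfolding del_at_def distinct_map set_map set_ys by auto
  then show "is_perm (n - 1) (del_at k p)"
    using p(1) assms(2) by (simp add: is_perm_def del_at_def)
  have "map (shift_up ?i) (del_at k p) = ?ys"
    unfolding del_at_def map_map by (rule map_idI) (metis comp_apply shift_up_shift_down ys(2))
  then show "rho ?i (Suc k) (del_at k p) = p"
    unfolding rho_eq_take_drop using assms(2) p(1) p_split by (simp add: min_def)
qed

lemma rectangular_del_at:
  assumes "is_perm n p" and "rectangular p" and "k < n"
  shows "rectangular (del_at k p)"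
  using rectangular_rhoD[of "p ! k" "Suc k" "del_at k p"] assms is_perm_del_at rho_del_at
  by (simp add: is_perm_def)

lemma all_less_4_iff: "(\<forall>a<(4::nat). P a) \<longleftrightarrow> P 0 \<and> P 1 \<and> P 2 \<and> P 3"
  by (auto simp: numeral_eq_Suc less_Suc_eq)

lemma rectangular_no_interleaving:
  assumes "rectangular p" and "i < j" "j < k" "k < l" "l < length p"
    and "min (p ! k) (p ! l) < min (p ! i) (p ! j)"
    and "min (p ! i) (p ! j) < max (p ! k) (p ! l)"
    and "max (p ! k) (p ! l) < max (p ! i) (p ! j)"
  shows False
proof -
  let ?idx = "[i, j, k, l]"
  have "\<exists>q :: nat list \<in> {[2, 4, 1, 3], [2, 4, 3, 1], [4, 2, 1, 3], [4, 2, 3, 1]}.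
          \<forall>a<4. \<forall>b<4. (p ! (?idx ! a) < p ! (?idx ! b)) \<longleftrightarrow> (q ! a < q ! b)"
    using assms(6-8)
    by (cases "p ! i < p ! j"; cases "p ! k < p ! l") (simp_all add: all_less_4_iff; linarith)+
  then obtain q :: "nat list" where q: "q \<in> {[2, 4, 1, 3], [2, 4, 3, 1], [4, 2, 1, 3], [4, 2, 3, 1]}"
    and iso: "\<forall>a<4. \<forall>b<4. (p ! (?idx ! a) < p ! (?idx ! b)) \<longleftrightarrow> (q ! a < q ! b)"
    by blast
  have "contains p q"
    unfolding contains_def using q iso assms(2-5) by (intro exI[of _ ?idx]) auto
  with q assms(1) show False
    unfolding rectangular_def avoids_def by blast
qed

lemma rectangular_second_entry:
  assumes "is_perm n p" and "rectangular p" and "2 \<le> n" and "2 \<le> p ! 0"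
  shows "p ! 1 \<in> {1, p ! 0 + 1, p ! 0 - 1}"
proof (rule ccontr)
  let ?a = "p ! 0" and ?b = "p ! 1"
  assume b: "?b \<notin> {1, ?a + 1, ?a - 1}"
  have p: "length p = n" "distinct p" "set p = {1..n}"
    using assms(1) by (auto simp: is_perm_def)
  have "?a \<in> set p" "?b \<in> set p"
    using p(1) assms(3) by auto
  then have "?a \<in> {1..n}" "?b \<in> {1..n}"
    using p(3) by blast+
  have "?a \<noteq> ?b"
    using p(1,2) assms(3) by (simp add: nth_eq_iff_index_eq)
  define c where "c = (if ?a < ?b then ?a + 1 else ?a - 1)"
  have c: "min ?a ?b < c" "c < max ?a ?b" "c \<in> {1..n}"
    using b \<open>?a \<in> {1..n}\<close> \<open>?b \<in> {1..n}\<close> \<open>?a \<noteq> ?b\<close> assms(4)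
    unfolding c_def by auto
  obtain k where k: "k < n" "p ! k = 1"
    using p(1,3) assms(3)
    by (metis atLeastAtMost_iff in_set_conv_nth one_le_numeral order.refl order.trans)
  obtain m where m: "m < n" "p ! m = c"
    using p(1,3) c(3) by (metis in_set_conv_nth)
  have "1 \<notin> {?a, ?b}" "c \<notin> {?a, ?b}"
    using b assms(4) c(1,2) by auto
  then have "1 < min ?a ?b"
    using \<open>?a \<in> {1..n}\<close> \<open>?b \<in> {1..n}\<close> by auto
  have "k \<notin> {0, 1}" "m \<notin> {0, 1}"
    using k(2) m(2) \<open>1 \<notin> {?a, ?b}\<close> \<open>c \<notin> {?a, ?b}\<close> by fastforce+
  then have "2 \<le> k" "2 \<le> m"
    by auto
  have "k \<noteq> m"
    using k(2) m(2) c(1) \<open>?a \<in> {1..n}\<close> \<open>?b \<in> {1..n}\<close> by auto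
  show False
  proof (cases "k < m")
    case True
    show False
      by (rule rectangular_no_interleaving[OF assms(2), of 0 1 k m])
        (use True \<open>2 \<le> k\<close> \<open>1 < min ?a ?b\<close> m k c p(1) in auto)
  next
    case False
    show False
      by (rule rectangular_no_interleaving[OF assms(2), of 0 1 m k])
        (use False \<open>2 \<le> m\<close> \<open>k \<noteq> m\<close> \<open>1 < min ?a ?b\<close> m k c p(1) in auto)
  qed
qed

lemma is_perm_Cons_pos: "is_perm m (c # t) \<Longrightarrow> 0 < c"
  unfolding is_perm_def by (metis atLeastAtMost_iff list.set_intros(1) not_one_le_zero not_gr0)

lemma rho_first: "rho i (Suc 0) xs = i # map (shift_up i) xs"
  by (simp add: rho_eq_take_drop)

lemma rho_second_Cons: "rho i 2 (c # xs) = shift_up i c # i # map (shift_up i) xs"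
  by (simp add: rho_eq_take_drop)

lemma in_dom_rectangular: "in_dom x s \<Longrightarrow> rectangular s"
  by (cases x) auto

definition last_op :: "nat list \<Rightarrow> op" where
  "last_op p = (if p ! 0 = 1 then Op1 else if p ! 1 = p ! 0 + 1 then OpU
     else if p ! 1 = p ! 0 - 1 then OpD else Op2)"

definition psi_pos :: "op \<Rightarrow> nat" where
  "psi_pos x = (if x = Op2 then 1 else 0)"

lemma
  assumes "is_perm m s" and "in_dom x s"
  shows last_op_psi: "last_op (psi x s) = x"
    and del_at_psi: "del_at (psi_pos x) (psi x s) = s"
proof -
  show "del_at (psi_pos x) (psi x s) = s"
    using assms(2) by (cases x) (auto simp: psi_pos_def del_at_rho numeral_2_eq_2)
  show "last_op (psi x s) = x"
  proof (cases x)
    case Op1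
    then show ?thesis by (simp add: rho_first last_op_def)
  next
    case Op2
    then obtain c t where "s = c # t" "c \<noteq> 1"
      using assms(2) by (cases s) auto
    moreover have "0 < c"
      using assms(1) \<open>s = c # t\<close> is_perm_Cons_pos by blast
    ultimately show ?thesis
      using Op2 by (simp add: rho_second_Cons last_op_def shift_up_def)
  next
    case OpU
    then obtain c t where "s = c # t" "c \<noteq> 1"
      using assms(2) by (cases s) auto
    then show ?thesis
      using OpU by (simp add: rho_first last_op_def shift_up_def)
  next
    case OpD
    then obtain c t where "s = c # t"
      using assms(2) by (cases s) auto
    moreover have "0 < c"
      using assms(1) \<open>s = c # t\<close> is_perm_Cons_pos by blast
    ultimately show ?thesis
      using OpD by (simp add: rho_first last_op_def shift_up_def)
  qed
qed

lemma psi_preimage_exists: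
  assumes "1 \<le> n" and "is_perm n p" and "rectangular p"
  shows "\<exists>x s. is_perm (n - 1) s \<and> in_dom x s \<and> p = psi x s"
proof -
  have p: "length p = n" "set p = {1..n}"
    using assms(2) by (auto simp: is_perm_def)
  have del_at: "is_perm (n - 1) (del_at k p)" "rectangular (del_at k p)"
    "rho (p ! k) (Suc k) (del_at k p) = p" if "k < n" for k
    using that assms is_perm_del_at rectangular_del_at rho_del_at by blast+
  show ?thesis
  proof (cases "p ! 0 = 1")
    case True
    then show ?thesis
      using del_at[of 0] assms(1) by (intro exI[of _ Op1] exI[of _ "del_at 0 p"]) auto
  next
    case False
    have "p ! 0 \<in> {1..n}"
      using p assms(1) by (metis One_nat_def Suc_le_lessD nth_mem)
    with False have "2 \<le> p ! 0" "2 \<le> n"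
      by auto
    then obtain a b t where abt: "p = a # b # t"
      using p(1) by (metis One_nat_def Suc_1 Suc_le_length_iff)
    then have b: "b \<in> {1, a + 1, a - 1}"
      using rectangular_second_entry[OF assms(2,3) \<open>2 \<le> n\<close> \<open>2 \<le> p ! 0\<close>] by simp
    consider "b = a + 1" | "b = a - 1" | "b = 1" "a \<noteq> 2"
      using b by fastforce
    then show ?thesis
    proof cases
      case 1
      then have "hd (del_at 0 p) = a"
        using abt by (simp add: shift_down_def)
      then show ?thesis
        using del_at[of 0] abt \<open>2 \<le> p ! 0\<close> \<open>2 \<le> n\<close>
        by (intro exI[of _ OpU] exI[of _ "del_at 0 p"]) auto
    next
      case 2
      then have "hd (del_at 0 p) + 1 = a"
        using abt \<open>2 \<le> p ! 0\<close> by (simp add: shift_down_def)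
      then show ?thesis
        using del_at[of 0] abt \<open>2 \<le> n\<close>
        by (intro exI[of _ OpD] exI[of _ "del_at 0 p"]) auto
    next
      case 3
      then have "hd (del_at 1 p) \<noteq> 1"
        using abt \<open>2 \<le> p ! 0\<close> by (simp add: shift_down_def)
      then show ?thesis
        using del_at[of 1] abt \<open>2 \<le> n\<close> 3
        by (intro exI[of _ Op2] exI[of _ "del_at 1 p"]) (auto simp: numeral_2_eq_2)
    qed
  qed
qed

theorem lemma4p2:
  fixes n :: nat and \<pi> :: "nat list"
  assumes "n \<ge> 1" and "is_perm n \<pi>" and "rectangular \<pi>"
  shows "\<exists>!(x, \<sigma>). is_perm (n - 1) \<sigma> \<and> rectangular \<sigma> \<and> in_dom x \<sigma> \<and> \<pi> = psi x \<sigma>"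
proof -
  obtain x \<sigma> where \<sigma>: "is_perm (n - 1) \<sigma>" "in_dom x \<sigma>" "\<pi> = psi x \<sigma>"
    using psi_preimage_exists[OF assms] by blast
  have unique: "(y, \<tau>) = (x, \<sigma>)" if "is_perm (n - 1) \<tau>" "in_dom y \<tau>" "\<pi> = psi y \<tau>" for y \<tau>
    using that \<sigma> last_op_psi del_at_psi by metis
  show ?thesis
    using \<sigma> unique in_dom_rectangular by (intro ex1I[of _ "(x, \<sigma>)"]) auto
qed

end
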